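(* Let $X\in\mathbb{R}^{n\times p}$, $\beta^\star\in\mathbb{R}^p$ with support $T$, $|T|=k$, $e^\star\in\mathbb{R}^n$ with support $S$, $|S|=s$, $w\in\mathbb{R}^n$, and $y=X\beta^\star+\sqrt{n}\,e^\star+w$. Let $(\widehat\beta,\widehat e)$ be an optimal solution of the extended Lasso $$\min_{\beta\in\mathbb{R}^p,\,e\in\mathbb{R}^n}\ \frac{1}{2n}\|y-X\beta-\sqrt{n}\,e\|_2^2+\lambda_{n,\beta}\|\beta\|_1+\lambda_{n,e}\|e\|_1$$ with regularization parameters $$\lambda_{n,\beta}=\frac{2}{\gamma}\frac{\|X^{T}w\|_\infty}{n},\qquad \lambda_{n,e}=\frac{2\|w\|_\infty}{\sqrt n},$$ where $\gamma\in(0,1]$. Assume $X$ satisfies the extended restricted eigenvalue condition with constant $\kappa_l>0$ over the set $\mathbb{C}$ (defined with $\lambda=\lambda_{n,e}/\lambda_{n,\beta}$). Then the errors $h=\widehat\beta-\beta^\star$, $f=\widehat e-e^\star$ satisfy $$\|h\|_2+\|f\|_2\le 3\kappa_l^{-2}\big(\lambda_{n,\beta}\sqrt{k}+\lambda_{n,e}\sqrt{s}\big).$$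
   Context: Restricted set: for $\lambda>0$, $\mathbb{C}=\{(h,f)\in\mathbb{R}^p\times\mathbb{R}^n:\ \|h_{T^c}\|_1+\lambda\|f_{S^c}\|_1\le 3\|h_T\|_1+3\lambda\|f_S\|_1\}$, where $h_T$ denotes the restriction of $h$ to the coordinates in $T$. Extended restricted eigenvalue (extended RE) condition over $\mathbb{C}$ with constant $\kappa_l>0$: $\frac{1}{\sqrt n}\|Xh+\sqrt n f\|_2\ge\kappa_l(\|h\|_2+\|f\|_2)$ for all $(h,f)\in\mathbb{C}$. *)

theory Defs
  imports "HOL-Analysis.Analysis"
begin

definition l1norm :: "real^'n \<Rightarrow> real" where
  "l1norm x = (\<Sum>i\<in>UNIV. \<bar>x $ i\<bar>)"

definition linfnorm :: "real^'n \<Rightarrow> real" where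
  "linfnorm x = Max (range (\<lambda>i. \<bar>x $ i\<bar>))"

definition supp :: "real^'n \<Rightarrow> 'n set" where
  "supp x = {i. x $ i \<noteq> 0}"

definition restr :: "real^'n \<Rightarrow> 'n set \<Rightarrow> real^'n" where
  "restr x A = (\<chi> i. if i \<in> A then x $ i else 0)"

definition restricted_set :: "'p::finite set \<Rightarrow> 'n::finite set \<Rightarrow> real \<Rightarrow> ((real^'p) \<times> (real^'n)) set" where
  "restricted_set T S lam = {(h, f).
     l1norm (restr h (- T)) + lam * l1norm (restr f (- S))
       \<le> 3 * l1norm (restr h T) + 3 * lam * l1norm (restr f S)}"

definition extended_RE :: "real^('p::finite)^('n::finite) \<Rightarrow> 'p set \<Rightarrow> 'n set \<Rightarrow> real \<Rightarrow> real \<Rightarrow> bool" where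
  "extended_RE X T S lam \<kappa> \<longleftrightarrow>
     (\<forall>(h, f) \<in> restricted_set T S lam.
        (1 / sqrt (real CARD('n))) * norm (X *v h + sqrt (real CARD('n)) *\<^sub>R f)
          \<ge> \<kappa> * (norm h + norm f))"

definition ext_lasso_obj :: "real^('p::finite)^('n::finite) \<Rightarrow> real^'n \<Rightarrow> real \<Rightarrow> real \<Rightarrow> real^'p \<Rightarrow> real^'n \<Rightarrow> real" where
  "ext_lasso_obj X y lb le \<beta> e =
     1 / (2 * real CARD('n)) * (norm (y - X *v \<beta> - sqrt (real CARD('n)) *\<^sub>R e))\<^sup>2
     + lb * l1norm \<beta> + le * l1norm e"

end

theory Submission
  imports Defs
begin

(*
  Write h = \<beta>h - \<beta>s, f = eh - es and v = X h + sqrt n f.  The proof has three parts.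
  (1) Basic inequality: comparing the objective at the optimum with its value at the
      truth gives  |v|^2/(2n) <= (w.v)/n + lb (|\<beta>s|_1 - |\<beta>h|_1) + le (|es|_1 - |eh|_1).
  (2) Noise bound: by Hoelder's inequality and the choice of lb, le, the term (w.v)/n is
      at most (lb |h|_1 + le |f|_1)/2.  Together with the coordinatewise l1-decrement
      lemma this yields |v|^2/(2n) <= lb (3|h_T|_1 - |h_T^c|_1)/2 + le (3|f_S|_1 - |f_S^c|_1)/2.
  (3) Since the left side is nonnegative, (h, f) lies in the cone C, so the extended RE
      condition applies; with |h_T|_1 <= sqrt k |h|_2 (Cauchy--Schwarz) one obtains
      \<kappa>^2 D^2 <= 3 M D for D = |h|_2 + |f|_2, M = lb sqrt k + le sqrt s, hence D <= 3M/\<kappa>^2.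
  General facts about the l1/l\<infinity> norms come first, then (1)-(3), then the theorem.
*)

lemma l1norm_nonneg: "l1norm (x::real^'n) \<ge> 0"
  unfolding l1norm_def by (rule sum_nonneg) auto

lemma linfnorm_nonneg: "linfnorm (x::real^'n) \<ge> 0"
  unfolding linfnorm_def by (rule order_trans[OF abs_ge_zero Max_ge]) auto

lemma l1norm_restr: "l1norm (restr x A) = (\<Sum>i\<in>UNIV. if i \<in> A then \<bar>x $ i\<bar> else 0)"
  unfolding l1norm_def restr_def by (rule sum.cong) auto

lemma inner_le_linfnorm_l1norm: "\<bar>(x::real^'n) \<bullet> y\<bar> \<le> linfnorm x * l1norm y"
proof -
  have coord: "\<bar>x $ i\<bar> \<le> linfnorm x" for i
    unfolding linfnorm_def by (rule Max_ge) auto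
  have "\<bar>x \<bullet> y\<bar> \<le> (\<Sum>i\<in>UNIV. \<bar>x $ i * y $ i\<bar>)"
    unfolding inner_vec_def by (simp add: sum_abs)
  also have "\<dots> \<le> (\<Sum>i\<in>UNIV. linfnorm x * \<bar>y $ i\<bar>)"
    by (intro sum_mono) (simp add: abs_mult coord mult_right_mono)
  finally show ?thesis by (simp add: l1norm_def sum_distrib_left)
qed

text \<open>A vector restricted to a set of \<open>k\<close> coordinates has l1 norm at most
  \<open>sqrt k\<close> times its Euclidean norm (Cauchy--Schwarz against the indicator of the set).\<close>
lemma l1norm_restr_le_sqrt_card: "l1norm (restr (x::real^'n) A) \<le> sqrt (real (card A)) * norm x"
proof -
  define u :: "real^'n" where "u = (\<chi> i. if i \<in> A then \<bar>x $ i\<bar> else 0)"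
  define ind :: "real^'n" where "ind = (\<chi> i. if i \<in> A then 1 else 0)"
  have "l1norm (restr x A) = u \<bullet> ind"
    unfolding l1norm_restr inner_vec_def u_def ind_def by (rule sum.cong) auto
  also have "\<dots> \<le> norm u * norm ind" by (rule norm_cauchy_schwarz)
  also have "norm ind = sqrt (real (card A))"
  proof -
    have "norm ind = sqrt (\<Sum>i\<in>UNIV. if i \<in> A then 1 else 0)"
      unfolding norm_vec_def L2_set_def ind_def by (intro arg_cong[where f=sqrt] sum.cong) auto
    also have "(\<Sum>i\<in>UNIV. if i \<in> A then 1 else 0::real) = real (card A)"
      by (simp add: sum.If_cases)
    finally show ?thesis .
  qed
  also have "norm u \<le> norm x"
    unfolding norm_le inner_vec_def u_def by (intro sum_mono) auto
  finally show ?thesis by (simp add: mult_right_mono mult.commute)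
qed

text \<open>Moving from \<open>b\<close> to \<open>b + h\<close> can decrease the l1 norm only through the coordinates
  of \<open>h\<close> on the support of \<open>b\<close>; this is what forces the Lasso error into the cone.\<close>
lemma l1norm_decrement:
  "l1norm h / 2 + l1norm b - l1norm (b + h)
     \<le> 3/2 * l1norm (restr h (supp b)) - 1/2 * l1norm (restr h (- supp b))"
proof -
  have "l1norm h / 2 + l1norm b - l1norm (b + h) = (\<Sum>i\<in>UNIV. \<bar>h $ i\<bar>/2 + \<bar>b $ i\<bar> - \<bar>b $ i + h $ i\<bar>)"
    unfolding l1norm_def by (simp add: sum.distrib sum_subtractf sum_divide_distrib)
  also have "\<dots> \<le> (\<Sum>i\<in>UNIV. 3/2 * (if i \<in> supp b then \<bar>h $ i\<bar> else 0)
                             - 1/2 * (if i \<in> - supp b then \<bar>h $ i\<bar> else 0))"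
    by (intro sum_mono) (auto simp: supp_def abs_if split: if_splits)
  finally show ?thesis unfolding l1norm_restr by (simp add: sum_subtractf sum_distrib_left)
qed

text \<open>Optimality of \<open>(\<beta>h, eh)\<close> against the true pair \<open>(\<beta>s, es)\<close>, after expanding the square.\<close>
lemma basic_inequality:
  fixes X :: "real^'p^'n" and \<beta>s \<beta>h :: "real^'p" and es eh w y v :: "real^'n"
  defines "N \<equiv> real CARD('n)"
  assumes y_def: "y = X *v \<beta>s + sqrt N *\<^sub>R es + w"
    and v_def: "v = X *v (\<beta>h - \<beta>s) + sqrt N *\<^sub>R (eh - es)"
    and opt: "ext_lasso_obj X y lb le \<beta>h eh \<le> ext_lasso_obj X y lb le \<beta>s es"
  shows "(norm v)\<^sup>2 / (2 * N)
           \<le> (w \<bullet> v) / N + lb * (l1norm \<beta>s - l1norm \<beta>h) + le * (l1norm es - l1norm eh)"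
proof -
  have N_pos: "N > 0" unfolding N_def by simp
  have "y - X *v \<beta>h - sqrt N *\<^sub>R eh = w - v"
    unfolding y_def v_def by (simp add: matrix_vector_mult_diff_distrib algebra_simps)
  moreover have "y - X *v \<beta>s - sqrt N *\<^sub>R es = w"
    unfolding y_def by simp
  ultimately have objective: "(norm (w - v))\<^sup>2 / (2 * N) + lb * l1norm \<beta>h + le * l1norm eh
                     \<le> (norm w)\<^sup>2 / (2 * N) + lb * l1norm \<beta>s + le * l1norm es"
    using opt unfolding ext_lasso_obj_def N_def by simp
  have "(norm (w - v))\<^sup>2 = (norm w)\<^sup>2 - 2 * (w \<bullet> v) + (norm v)\<^sup>2"
    by (simp add: power2_norm_eq_inner inner_diff_left inner_diff_right inner_commute)
  then have "(norm (w - v))\<^sup>2 / (2 * N) = (norm w)\<^sup>2 / (2 * N) - (w \<bullet> v) / N + (norm v)\<^sup>2 / (2 * N)"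
    using N_pos by (simp add: field_simps)
  with objective show ?thesis by (simp add: algebra_simps)
qed

lemma noise_bound:
  fixes X :: "real^'p^'n" and h :: "real^'p" and f w :: "real^'n"
  defines "N \<equiv> real CARD('n)"
  assumes lb: "linfnorm (transpose X *v w) \<le> lb * N / 2"
    and le: "linfnorm w \<le> le * sqrt N / 2"
  shows "w \<bullet> (X *v h + sqrt N *\<^sub>R f) \<le> N / 2 * (lb * l1norm h + le * l1norm f)"
proof -
  have N_pos: "N > 0" unfolding N_def by simp
  have "w \<bullet> (X *v h) \<le> linfnorm (transpose X *v w) * l1norm h"
    using abs_le_D1[OF inner_le_linfnorm_l1norm[of "transpose X *v w" h]]
    by (simp add: dot_lmul_matrix)
  also have "\<dots> \<le> lb * N / 2 * l1norm h"
    using lb l1norm_nonneg[of h] by (rule mult_right_mono)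
  finally have term_h: "w \<bullet> (X *v h) \<le> lb * N / 2 * l1norm h" .
  have "w \<bullet> f \<le> linfnorm w * l1norm f"
    using abs_le_D1[OF inner_le_linfnorm_l1norm[of w f]] .
  also have "\<dots> \<le> le * sqrt N / 2 * l1norm f"
    using le l1norm_nonneg[of f] by (rule mult_right_mono)
  finally have "sqrt N * (w \<bullet> f) \<le> sqrt N * (le * sqrt N / 2 * l1norm f)"
    by (rule mult_left_mono) (use N_pos in simp)
  also have "\<dots> = le * N / 2 * l1norm f"
    using N_pos by (simp add: algebra_simps)
  finally show ?thesis
    using term_h by (simp add: inner_add_right algebra_simps)
qed

text \<open>Membership in the restricted set, in the form it arises (scaled by \<open>lb\<close>).\<close>
lemma restricted_setI:
  assumes "lb > 0"
    and "lb * l1norm (restr h (- T)) + le * l1norm (restr f (- S))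
           \<le> 3 * lb * l1norm (restr h T) + 3 * le * l1norm (restr f S)"
  shows "(h, f) \<in> restricted_set T S (le / lb)"
proof -
  have "(lb * l1norm (restr h (- T)) + le * l1norm (restr f (- S))) / lb
          \<le> (3 * lb * l1norm (restr h T) + 3 * le * l1norm (restr f S)) / lb"
    using assms by (simp add: divide_right_mono)
  then show ?thesis
    using assms(1) unfolding restricted_set_def by (simp add: add_divide_distrib)
qed

lemma quadratic_to_linear_bound:
  fixes D c \<kappa> :: real
  assumes "\<kappa> > 0" "D \<ge> 0" "c \<ge> 0" "(\<kappa> * D)\<^sup>2 \<le> c * D"
  shows "D \<le> c / \<kappa>\<^sup>2"
proof (cases "D = 0")
  case False
  then have "\<kappa>\<^sup>2 * D \<le> c"
    using assms(2,4) by (simp add: power2_eq_square algebra_simps)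
  then show ?thesis
    using assms(1) by (simp add: field_simps)
qed (use assms in simp)

lemma error_bound_from_cone_inequality:
  fixes X :: "real^'p^'n" and h :: "real^'p" and f v :: "real^'n"
  defines "N \<equiv> real CARD('n)"
  assumes v_def: "v = X *v h + sqrt N *\<^sub>R f"
    and RE: "extended_RE X T S (le / lb) \<kappa>"
    and \<kappa>: "\<kappa> > 0" and lb: "lb > 0" and le: "le \<ge> 0"
    and cone: "(norm v)\<^sup>2 / (2 * N)
       \<le> lb * (3/2 * l1norm (restr h T) - 1/2 * l1norm (restr h (- T)))
         + le * (3/2 * l1norm (restr f S) - 1/2 * l1norm (restr f (- S)))"
  shows "norm h + norm f \<le> 3 / \<kappa>\<^sup>2 * (lb * sqrt (real (card T)) + le * sqrt (real (card S)))"
proof -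
  define D where "D = norm h + norm f"
  define M where "M = lb * sqrt (real (card T)) + le * sqrt (real (card S))"
  have N_pos: "N > 0" unfolding N_def by simp
  have tails: "0 \<le> lb * l1norm (restr h (- T))" "0 \<le> le * l1norm (restr f (- S))"
    using lb le by (simp_all add: l1norm_nonneg)
  have "0 \<le> (norm v)\<^sup>2 / (2 * N)" using N_pos by simp
  then have "(h, f) \<in> restricted_set T S (le / lb)"
    using cone by (intro restricted_setI[OF lb]) (simp add: algebra_simps)
  then have "\<kappa> * D \<le> 1 / sqrt N * norm v"
    using RE unfolding extended_RE_def v_def D_def N_def by blast
  then have "(\<kappa> * D)\<^sup>2 \<le> (norm v)\<^sup>2 / N"
    using \<kappa> N_pos power_mono[of "\<kappa> * D" "1 / sqrt N * norm v" 2]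
    by (simp add: D_def power_divide)
  also have "\<dots> = 2 * ((norm v)\<^sup>2 / (2 * N))"
    by simp
  also have "\<dots> \<le> 3 * (lb * l1norm (restr h T) + le * l1norm (restr f S))"
    using cone tails by (simp add: algebra_simps)
  also have "\<dots> \<le> 3 * (lb * (sqrt (real (card T)) * norm h) + le * (sqrt (real (card S)) * norm f))"
    using lb le by (intro mult_left_mono add_mono l1norm_restr_le_sqrt_card) auto
  also have "\<dots> \<le> 3 * M * D"
    using lb le unfolding M_def D_def by (simp add: algebra_simps)
  finally have "(\<kappa> * D)\<^sup>2 \<le> 3 * M * D" .
  then have "D \<le> 3 * M / \<kappa>\<^sup>2"
    using \<kappa> lb le by (intro quadratic_to_linear_bound) (auto simp: D_def M_def)
  then show ?thesis unfolding D_def M_def by simp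
qed

theorem theorem1:
  fixes X :: "real^'p^'n" and \<beta>s \<beta>h :: "real^'p" and es eh w y :: "real^'n"
    and \<gamma> \<kappa> lb le :: real
  assumes y_def: "y = X *v \<beta>s + sqrt (real CARD('n)) *\<^sub>R es + w"
    and \<gamma>: "0 < \<gamma>" "\<gamma> \<le> 1"
    and lb_def: "lb = (2 / \<gamma>) * (linfnorm (transpose X *v w) / real CARD('n))"
    and le_def: "le = 2 * linfnorm w / sqrt (real CARD('n))"
    and lb_pos: "lb > 0"
    and opt: "\<forall>\<beta> e. ext_lasso_obj X y lb le \<beta>h eh \<le> ext_lasso_obj X y lb le \<beta> e"
    and \<kappa>: "\<kappa> > 0"
    and RE: "extended_RE X (supp \<beta>s) (supp es) (le / lb) \<kappa>"
  shows "norm (\<beta>h - \<beta>s) + norm (eh - es)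
           \<le> 3 / \<kappa>\<^sup>2 * (lb * sqrt (real (card (supp \<beta>s))) + le * sqrt (real (card (supp es))))"
proof -
  define N where "N = real CARD('n)"
  define h where "h = \<beta>h - \<beta>s"
  define f where "f = eh - es"
  define v where "v = X *v h + sqrt N *\<^sub>R f"
  have N_pos: "N > 0" unfolding N_def by simp
  have le_nonneg: "le \<ge> 0" unfolding le_def using linfnorm_nonneg[of w] by simp
  have basic: "(norm v)\<^sup>2 / (2 * N)
          \<le> (w \<bullet> v) / N + lb * (l1norm \<beta>s - l1norm \<beta>h) + le * (l1norm es - l1norm eh)"
    unfolding N_def
    by (rule basic_inequality[OF y_def]) (use opt in \<open>simp_all add: v_def h_def f_def N_def\<close>)
  have "linfnorm (transpose X *v w) \<le> lb * N / 2"
    using \<gamma> lb_pos N_pos unfolding lb_def N_def by (simp add: field_simps)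
  then have "w \<bullet> v \<le> N / 2 * (lb * l1norm h + le * l1norm f)"
    unfolding v_def N_def by (rule noise_bound) (simp add: le_def)
  then have "(w \<bullet> v) / N \<le> lb / 2 * l1norm h + le / 2 * l1norm f"
    using N_pos by (simp add: field_simps)
  moreover have "\<beta>h = \<beta>s + h" "eh = es + f" unfolding h_def f_def by simp_all
  ultimately have "(norm v)\<^sup>2 / (2 * N)
      \<le> lb * (l1norm h / 2 + l1norm \<beta>s - l1norm (\<beta>s + h)) + le * (l1norm f / 2 + l1norm es - l1norm (es + f))"
    using basic by (simp add: algebra_simps)
  also have "\<dots> \<le> lb * (3/2 * l1norm (restr h (supp \<beta>s)) - 1/2 * l1norm (restr h (- supp \<beta>s)))
                 + le * (3/2 * l1norm (restr f (supp es)) - 1/2 * l1norm (restr f (- supp es)))"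
    using lb_pos le_nonneg by (intro add_mono mult_left_mono l1norm_decrement) auto
  finally have "norm h + norm f
      \<le> 3 / \<kappa>\<^sup>2 * (lb * sqrt (real (card (supp \<beta>s))) + le * sqrt (real (card (supp es))))"
    by (intro error_bound_from_cone_inequality[OF _ RE \<kappa> lb_pos le_nonneg])
       (simp_all add: v_def N_def)
  then show ?thesis unfolding h_def f_def .
qed

end
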